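(* For every positive integer $n$, \[ \sum_{k=1}^{n}(8k-1)\frac{(1)_k(-\tfrac{1}{4})_k(-\tfrac{3}{4})_k}{(\tfrac{1}{2})_k^2(\tfrac{3}{2})_k}\frac{(\tfrac{1}{2}+n)_k(-n)_k}{(\tfrac{1}{2}+3n)_k(-1-3n)_k}\sum_{i=1}^{k}\left\{\frac{1}{(2i-1)^2}-\frac{9}{4i^2}\right\} =\frac{n!^2(\tfrac{1}{6})_n(\tfrac{5}{6})_n}{(\tfrac{1}{2})_n^2(\tfrac{2}{3})_n(\tfrac{4}{3})_n}\sum_{j=1}^{2n}\frac{(-1)^{j}}{j^2}. \]
   Context: For a complex number $x$ and a nonnegative integer $n$, $(x)_n=x(x+1)\cdots(x+n-1)$ denotes the shifted factorial (Pochhammer symbol), with $(x)_0=1$. *)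

theory Defs
  imports Complex_Main
begin

end

theory Submission
  imports Defs
begin

text \<open>
  Write \<open>F(n,k)\<close> for the summand, \<open>c(n)\<close> for the factor in front of the alternating sum and
  \<open>H(k)\<close> for the inner sum. \<open>F(n,k)\<close> is hypergeometric in both \<open>k\<close> and \<open>n\<close>, and
  \<open>c(n+1) = \<gamma>(n) c(n)\<close>. A rational certificate \<open>R\<close> (from Gosper's algorithm) makes
  \<open>F(n+1,k) - \<gamma>(n) F(n,k)\<close> telescope in \<open>k\<close>: this is the WZ proof of
  \<open>\<Sum>\<^sub>k F(n,k) = 1 - c(n)\<close>. For the weighted sum a second certificate \<open>B\<close> makes
  \<open>F(n+1,k) (R(n,k) H(k-1) - B(n,k))\<close> telescope up to \<open>\<alpha>(n) \<gamma>(n) F(n,k)\<close>, where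
  \<open>\<alpha>(n) = 1/(2n+1)\<^sup>2 - 1/(2n+2)\<^sup>2\<close> is what the alternating sum loses from \<open>n\<close> to \<open>n+1\<close>.
\<close>

definition summand :: "nat \<Rightarrow> nat \<Rightarrow> real" where
  "summand n k = (8 * real k - 1)
     * (pochhammer 1 k * pochhammer (-1/4) k * pochhammer (-3/4) k
        / ((pochhammer (1/2) k)^2 * pochhammer (3/2) k))
     * (pochhammer (1/2 + real n) k * pochhammer (- real n) k
        / (pochhammer (1/2 + 3 * real n) k * pochhammer (-1 - 3 * real n) k))"

definition closed_form :: "nat \<Rightarrow> real" where
  "closed_form n = (real (fact n))^2 * pochhammer (1/6) n * pochhammer (5/6) n
     / ((pochhammer (1/2) n)^2 * pochhammer (2/3) n * pochhammer (4/3) n)"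

definition inner_sum :: "nat \<Rightarrow> real" where
  "inner_sum k = (\<Sum>i=1..k. 1 / (2 * real i - 1)^2 - 9 / (4 * (real i)^2))"

definition alternating_sum :: "nat \<Rightarrow> real" where
  "alternating_sum n = (\<Sum>j=1..2*n. (-1)^j / (real j)^2)"

text \<open>
  Rational functions for the step from \<open>n\<close> to \<open>n+1\<close>; \<open>R\<close>, \<open>B\<close>, \<open>\<gamma>\<close> and \<open>\<alpha>\<close> above are
  \<open>certificate\<close>, \<open>inner_certificate\<close>, \<open>closed_form_ratio\<close> and \<open>alternating_decrement\<close>.
\<close>

definition step_ratio :: "real \<Rightarrow> real \<Rightarrow> real" where
  "step_ratio n k = ((8*k+7)*(k+1)*(4*k-1)*(4*k-3)*(2*n+2*k+3)*(k-n-1))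
     / (2*(8*k-1)*(2*k+1)^2*(2*k+3)*(6*n+2*k+7)*(k-3*n-4))"

definition level_ratio :: "real \<Rightarrow> real \<Rightarrow> real" where
  "level_ratio n k = ((n+1)^2*(n+1-k)*(2*k+6*n+1)*(2*k+6*n+3)*(2*k+6*n+5))
     / ((2*n+1)^2*(2*n+2*k+1)*(k-3*n-4)*(k-3*n-3)*(3*n+2-k))"

definition closed_form_ratio :: "real \<Rightarrow> real" where
  "closed_form_ratio n = (n+1)^2*(6*n+1)*(6*n+5) / ((2*n+1)^2*(3*n+2)*(3*n+4))"

definition certificate :: "real \<Rightarrow> real \<Rightarrow> real" where
  "certificate n k = (-2*(4*n+3)*k*(2*k-1)^2*(2*k+1)*(2*k+6*n+5))
     / ((8*k-1)*(2*n+1)^2*(2*n+2*k+1)*(k-3*n-4)*(k-3*n-3))"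

definition inner_certificate :: "real \<Rightarrow> real \<Rightarrow> real" where
  "inner_certificate n k = ((4*n+3)*(2*k-1)^2*(2*k+1)*(2*k+6*n+3)*(2*k+6*n+5)*(2*k-6*n-3))
     / (2*(2*n+1)^4*(8*k-1)*k*(2*k+2*n+1)*(k-3*n-4)*(k-3*n-3))"

definition inner_increment :: "real \<Rightarrow> real" where
  "inner_increment k = ((3-4*k)*(8*k-3)) / (4*k^2*(2*k-1)^2)"

definition alternating_decrement :: "real \<Rightarrow> real" where
  "alternating_decrement n = (4*n+3) / ((2*n+1)^2*(2*n+2)^2)"

lemma divide_eq_divide_by_common_factor:
  fixes a b c x y :: "'a::field"
  assumes "c \<noteq> 0" "a = x * c" "b = y * c"
  shows "a / b = x / y"
  using assms by simp

lemma divide_eq_over_common_denominator: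
  fixes x y m D :: "'a::field"
  assumes "y * m = D" "m \<noteq> 0"
  shows "x / y = x * m / D"
  using assms by (metis mult_divide_mult_cancel_right)

lemma pochhammer_shift:
  "pochhammer a k * (a + of_nat k) = a * pochhammer (a + 1) k"
  by (metis pochhammer_Suc pochhammer_rec)

lemma pochhammer_eq_shift_up:
  fixes a :: "'a::field"
  assumes "b = a + 1" "a + of_nat k \<noteq> 0"
  shows "pochhammer a k = pochhammer b k * (a / (a + of_nat k))"
  using pochhammer_shift[of a k] assms by (simp add: field_simps)

lemma pochhammer_eq_shift_down:
  fixes a :: "'a::field"
  assumes "b = a + 1" "a \<noteq> 0"
  shows "pochhammer b k = pochhammer a k * ((a + of_nat k) / a)"
  using pochhammer_shift[of a k] assms by (simp add: field_simps)

lemma certificate_identity: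
  fixes n k :: real
  assumes "0 \<le> n" "0 \<le> k" "k \<le> n + 1" "8 * k \<noteq> 1"
  shows "step_ratio n k * certificate n (k + 1) - certificate n k = 1 - level_ratio n k"
proof -
  have nz: "8*k-1 \<noteq> 0" "2*n+1 \<noteq> 0" "2*n+2*k+1 \<noteq> 0" "2*n+2*k+3 \<noteq> 0" "k-3*n-4 \<noteq> 0"
    "k-3*n-3 \<noteq> 0" "k-3*n-2 \<noteq> 0" "8*k+7 \<noteq> 0" "2*k+1 \<noteq> 0" "2*k+3 \<noteq> 0" "2*k+6*n+7 \<noteq> 0"
    using assms by auto
  define D where "D = (8*k-1)*(2*n+1)^2*(2*n+2*k+1)*(k-3*n-4)*(k-3*n-3)*(k-3*n-2)"
  have "D \<noteq> 0"
    unfolding D_def using nz by simp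
  have "step_ratio n k * certificate n (k + 1)
      = (-(4*n+3)*(k+1)^2*(4*k-1)*(4*k-3)*(k-n-1))
        / ((8*k-1)*(2*n+1)^2*(k-3*n-4)*(k-3*n-3)*(k-3*n-2))"
    unfolding step_ratio_def certificate_def times_divide_times_eq
    by (rule divide_eq_divide_by_common_factor
          [where c = "2*(8*k+7)*(2*n+2*k+3)*(2*k+1)^2*(2*k+3)*(2*k+6*n+7)"])
       (use nz in simp, algebra+)
  also have "\<dots> = (-(4*n+3)*(k+1)^2*(4*k-1)*(4*k-3)*(k-n-1)*(2*n+2*k+1)) / D"
    unfolding D_def
    by (rule divide_eq_over_common_denominator) (algebra, use nz in simp)
  finally have a: "step_ratio n k * certificate n (k + 1)
      = (-(4*n+3)*(k+1)^2*(4*k-1)*(4*k-3)*(k-n-1)*(2*n+2*k+1)) / D" .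
  have b: "certificate n k = (-2*(4*n+3)*k*(2*k-1)^2*(2*k+1)*(2*k+6*n+5)*(k-3*n-2)) / D"
    unfolding certificate_def D_def
    by (rule divide_eq_over_common_denominator) (use nz in simp_all)
  have c: "level_ratio n k
      = ((n+1)^2*(n+1-k)*(2*k+6*n+1)*(2*k+6*n+3)*(2*k+6*n+5)*(-(8*k-1))) / D"
    unfolding level_ratio_def D_def
    by (rule divide_eq_over_common_denominator) (algebra, use nz in simp)
  show ?thesis
    unfolding a b c using \<open>D \<noteq> 0\<close> by (simp add: divide_simps) (simp add: D_def, algebra)
qed

lemma inner_certificate_identity:
  fixes n k :: real
  assumes "0 \<le> n" "1 \<le> k" "k \<le> n + 1"
  shows "- (step_ratio n k * inner_certificate n (k + 1)) + certificate n k * inner_increment k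
      + inner_certificate n k = - (alternating_decrement n * level_ratio n k)"
proof -
  have nz: "8*k-1 \<noteq> 0" "2*n+1 \<noteq> 0" "2*n+2*k+1 \<noteq> 0" "2*n+2*k+3 \<noteq> 0" "k-3*n-4 \<noteq> 0"
    "k-3*n-3 \<noteq> 0" "k-3*n-2 \<noteq> 0" "8*k+7 \<noteq> 0" "2*k+1 \<noteq> 0" "2*k+3 \<noteq> 0" "2*k+6*n+7 \<noteq> 0"
    "k \<noteq> 0" "2*k-1 \<noteq> 0" "k+1 \<noteq> 0" "n+1 \<noteq> 0" "2*(k-3*n-2) \<noteq> 0"
    using assms by auto
  define D where
    "D = 4*k*(8*k-1)*(2*n+1)^4*(2*n+2*k+1)*(k-3*n-4)*(k-3*n-3)*(k-3*n-2)"
  have "D \<noteq> 0"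
    unfolding D_def using nz by simp
  have "step_ratio n k * inner_certificate n (k + 1)
      = ((4*n+3)*(4*k-1)*(4*k-3)*(k-n-1)*(2*k+6*n+5)*(2*k-6*n-1))
        / (4*(8*k-1)*(2*n+1)^4*(k-3*n-4)*(k-3*n-3)*(k-3*n-2))"
    unfolding step_ratio_def inner_certificate_def times_divide_times_eq
    by (rule divide_eq_divide_by_common_factor
          [where c = "(8*k+7)*(k+1)*(2*n+2*k+3)*(2*k+1)^2*(2*k+3)*(2*k+6*n+7)"])
       (use nz in simp, algebra+)
  also have "\<dots> = ((4*n+3)*(4*k-1)*(4*k-3)*(k-n-1)*(2*k+6*n+5)*(2*k-6*n-1)*(k*(2*n+2*k+1))) / D"
    unfolding D_def
    by (rule divide_eq_over_common_denominator) (algebra, use nz in simp)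
  finally have a: "step_ratio n k * inner_certificate n (k + 1)
      = ((4*n+3)*(4*k-1)*(4*k-3)*(k-n-1)*(2*k+6*n+5)*(2*k-6*n-1)*(k*(2*n+2*k+1))) / D" .
  have "certificate n k * inner_increment k
      = (-(4*n+3)*(2*k+1)*(2*k+6*n+5)*(3-4*k)*(8*k-3))
        / (2*k*(8*k-1)*(2*n+1)^2*(2*n+2*k+1)*(k-3*n-4)*(k-3*n-3))"
    unfolding certificate_def inner_increment_def times_divide_times_eq
    by (rule divide_eq_divide_by_common_factor[where c = "2*k*(2*k-1)^2"])
       (use nz in simp, algebra+)
  also have "\<dots> = (-(4*n+3)*(2*k+1)*(2*k+6*n+5)*(3-4*k)*(8*k-3)*(2*(2*n+1)^2*(k-3*n-2))) / D"
    unfolding D_def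
    by (rule divide_eq_over_common_denominator) (algebra, use nz in simp)
  finally have b: "certificate n k * inner_increment k
      = (-(4*n+3)*(2*k+1)*(2*k+6*n+5)*(3-4*k)*(8*k-3)*(2*(2*n+1)^2*(k-3*n-2))) / D" .
  have "alternating_decrement n * level_ratio n k
      = ((4*n+3)*(n+1-k)*(2*k+6*n+1)*(2*k+6*n+3)*(2*k+6*n+5))
        / (4*(2*n+1)^4*(2*n+2*k+1)*(k-3*n-4)*(k-3*n-3)*(3*n+2-k))"
    unfolding alternating_decrement_def level_ratio_def times_divide_times_eq
    by (rule divide_eq_divide_by_common_factor[where c = "(n+1)^2"])
       (use nz in simp, algebra+)
  also have "\<dots> = ((4*n+3)*(n+1-k)*(2*k+6*n+1)*(2*k+6*n+3)*(2*k+6*n+5)*(-(k*(8*k-1)))) / D"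
    unfolding D_def
    by (rule divide_eq_over_common_denominator) (algebra, use nz in simp)
  finally have c: "alternating_decrement n * level_ratio n k
      = ((4*n+3)*(n+1-k)*(2*k+6*n+1)*(2*k+6*n+3)*(2*k+6*n+5)*(-(k*(8*k-1)))) / D" .
  have d: "inner_certificate n k
      = ((4*n+3)*(2*k-1)^2*(2*k+1)*(2*k+6*n+3)*(2*k+6*n+5)*(2*k-6*n-3)*(2*(k-3*n-2))) / D"
    unfolding inner_certificate_def D_def
    by (rule divide_eq_over_common_denominator) (algebra, use nz in simp)
  show ?thesis
    unfolding a b c d using \<open>D \<noteq> 0\<close> by (simp add: divide_simps) algebra
qed

lemma inner_certificate_initial:
  fixes n :: real
  assumes "0 \<le> n"
  shows "step_ratio n 0 * inner_certificate n 1 = alternating_decrement n * closed_form_ratio n"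
proof -
  have nz: "2*n+3 \<noteq> 0" "6*n+7 \<noteq> 0" "3*n+4 \<noteq> 0" "2*n+1 \<noteq> 0" "n+1 \<noteq> 0" "3*n+2 \<noteq> 0"
    using assms by auto
  have s: "step_ratio n 0 = (-(7*(2*n+3)*(n+1))) / (2*(6*n+7)*(3*n+4))"
    unfolding step_ratio_def
    by (rule divide_eq_divide_by_common_factor[where c = 3])
       (simp_all add: algebra_simps power2_eq_square power3_eq_cube)
  have b: "inner_certificate n 1
      = (-((4*n+3)*(6*n+5)*(6*n+7)*(6*n+1))) / (14*(2*n+1)^4*(2*n+3)*(n+1)*(3*n+2))"
    unfolding inner_certificate_def
    by (rule divide_eq_divide_by_common_factor[where c = 3])
       (simp_all add: algebra_simps power2_eq_square power3_eq_cube power4_eq_xxxx)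
  have "step_ratio n 0 * inner_certificate n 1
      = ((4*n+3)*(6*n+5)*(6*n+1)) / (4*(3*n+4)*(2*n+1)^4*(3*n+2))"
    unfolding s b times_divide_times_eq
    by (rule divide_eq_divide_by_common_factor[where c = "7*(2*n+3)*(n+1)*(6*n+7)"])
       (use nz in simp, algebra+)
  also have "\<dots> = alternating_decrement n * closed_form_ratio n"
    unfolding alternating_decrement_def closed_form_ratio_def times_divide_times_eq
    by (rule divide_eq_divide_by_common_factor[where c = "(n+1)^2", symmetric])
       (use nz in simp, algebra+)
  finally show ?thesis .
qed

lemma summand_Suc_k:
  "summand (Suc n) (Suc k) = summand (Suc n) k * step_ratio (real n) (real k)"
proof -
  let ?n = "real n" and ?k = "real k"
  have "8 * ?k - 1 \<noteq> 0"
    by (cases k) auto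
  then have "8 * real (Suc k) - 1 = (8 * ?k - 1) * ((8 * ?k + 7) / (8 * ?k - 1))"
    by simp
  then have "summand (Suc n) (Suc k) = summand (Suc n) k
      * ((8 * ?k + 7) / (8 * ?k - 1)
         * ((1 + ?k) * (-1/4 + ?k) * (-3/4 + ?k) / ((1/2 + ?k)^2 * (3/2 + ?k)))
         * ((1/2 + real (Suc n) + ?k) * (- real (Suc n) + ?k)
            / ((1/2 + 3 * real (Suc n) + ?k) * (-1 - 3 * real (Suc n) + ?k))))"
    unfolding summand_def pochhammer_Suc
    by (simp only: times_divide_times_eq power_mult_distrib mult_ac)
  also have "\<dots> = summand (Suc n) k * step_ratio ?n ?k"
    unfolding step_ratio_def times_divide_times_eq of_nat_Suc
    by (rule arg_cong[where f = "(*) (summand (Suc n) k)"],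
        rule divide_eq_divide_by_common_factor[where c = "1/32"]) (simp, algebra+)
  finally show ?thesis .
qed

lemma summand_Suc_n:
  "summand n k * closed_form_ratio (real n) = summand (Suc n) k * level_ratio (real n) (real k)"
proof -
  let ?n = "real n" and ?k = "real k"
  have a: "pochhammer (1/2 + ?n) k
      = pochhammer (1/2 + real (Suc n)) k * ((1/2 + ?n) / (1/2 + ?n + ?k))"
    by (rule pochhammer_eq_shift_up) simp_all
  have b: "pochhammer (- ?n) k = pochhammer (- real (Suc n)) k * ((?k - ?n - 1) / (- ?n - 1))"
    using pochhammer_eq_shift_down[of "- ?n" "- real (Suc n)" k] by (simp add: algebra_simps)
  have c1: "pochhammer (1/2 + 3 * ?n) k
      = pochhammer (3/2 + 3 * ?n) k * ((1/2 + 3 * ?n) / (1/2 + 3 * ?n + ?k))"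
    by (rule pochhammer_eq_shift_up) simp_all
  have c2: "pochhammer (3/2 + 3 * ?n) k
      = pochhammer (5/2 + 3 * ?n) k * ((3/2 + 3 * ?n) / (3/2 + 3 * ?n + ?k))"
    by (rule pochhammer_eq_shift_up) simp_all
  have c3: "pochhammer (5/2 + 3 * ?n) k
      = pochhammer (1/2 + 3 * real (Suc n)) k * ((5/2 + 3 * ?n) / (5/2 + 3 * ?n + ?k))"
    by (rule pochhammer_eq_shift_up) simp_all
  have d1: "pochhammer (-1 - 3 * ?n) k
      = pochhammer (-2 - 3 * ?n) k * ((-2 - 3 * ?n + ?k) / (-2 - 3 * ?n))"
    by (rule pochhammer_eq_shift_down) simp_all
  have d2: "pochhammer (-2 - 3 * ?n) k
      = pochhammer (-3 - 3 * ?n) k * ((-3 - 3 * ?n + ?k) / (-3 - 3 * ?n))"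
    by (rule pochhammer_eq_shift_down) simp_all
  have d3: "pochhammer (-3 - 3 * ?n) k
      = pochhammer (-4 - 3 * ?n) k * ((-4 - 3 * ?n + ?k) / (-4 - 3 * ?n))"
    by (rule pochhammer_eq_shift_down) simp_all
  have d4: "-1 - 3 * real (Suc n) = -4 - 3 * ?n"
    by simp
  have "summand n k = summand (Suc n) k
     * ((1/2 + ?n) * (?k - ?n - 1)
        * ((1/2 + 3 * ?n + ?k) * (3/2 + 3 * ?n + ?k) * (5/2 + 3 * ?n + ?k))
        * ((-4 - 3 * ?n) * (-3 - 3 * ?n) * (-2 - 3 * ?n))
      / ((1/2 + ?n + ?k) * (- ?n - 1)
        * ((1/2 + 3 * ?n) * (3/2 + 3 * ?n) * (5/2 + 3 * ?n))
        * ((-4 - 3 * ?n + ?k) * (-3 - 3 * ?n + ?k) * (-2 - 3 * ?n + ?k))))"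
    unfolding summand_def d4 a b c1 c2 c3 d1 d2 d3
    by (simp only: times_divide_eq_right times_divide_eq_left divide_divide_eq_left
        divide_divide_eq_right mult_ac)
  moreover have "(1/2 + ?n) * (?k - ?n - 1)
        * ((1/2 + 3 * ?n + ?k) * (3/2 + 3 * ?n + ?k) * (5/2 + 3 * ?n + ?k))
        * ((-4 - 3 * ?n) * (-3 - 3 * ?n) * (-2 - 3 * ?n))
      / ((1/2 + ?n + ?k) * (- ?n - 1)
        * ((1/2 + 3 * ?n) * (3/2 + 3 * ?n) * (5/2 + 3 * ?n))
        * ((-4 - 3 * ?n + ?k) * (-3 - 3 * ?n + ?k) * (-2 - 3 * ?n + ?k)))
      * closed_form_ratio ?n = level_ratio ?n ?k"
    unfolding closed_form_ratio_def level_ratio_def times_divide_times_eq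
    by (rule divide_eq_divide_by_common_factor
          [where c = "3*(2*?n+1)*(?n+1)*(3*?n+2)*(3*?n+4)*(6*?n+1)*(6*?n+5)/16"])
       (simp add: add_pos_nonneg, algebra+)
  ultimately show ?thesis
    by (simp only: mult.assoc)
qed

lemma closed_form_Suc: "closed_form (Suc n) = closed_form n * closed_form_ratio (real n)"
proof -
  let ?n = "real n"
  have "real (fact (Suc n)) = (1 + ?n) * real (fact n)"
    by (simp add: algebra_simps)
  then have "closed_form (Suc n) = closed_form n
     * ((1 + ?n)^2 * (1/6 + ?n) * (5/6 + ?n) / ((1/2 + ?n)^2 * (2/3 + ?n) * (4/3 + ?n)))"
    unfolding closed_form_def pochhammer_Suc
    by (simp only: times_divide_times_eq power_mult_distrib mult_ac)
  also have "(1 + ?n)^2 * (1/6 + ?n) * (5/6 + ?n) / ((1/2 + ?n)^2 * (2/3 + ?n) * (4/3 + ?n))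
      = closed_form_ratio ?n"
    unfolding closed_form_ratio_def
    by (rule divide_eq_divide_by_common_factor[where c = "1/36"]) (simp, algebra+)
  finally show ?thesis .
qed

lemma summand_0 [simp]: "summand n 0 = -1"
  by (simp add: summand_def)

lemma summand_eq_0: "n < k \<Longrightarrow> summand n k = 0"
  by (simp add: summand_def pochhammer_of_nat_eq_0_iff)

lemma inner_sum_Suc: "inner_sum (Suc k) = inner_sum k + inner_increment (real (Suc k))"
proof -
  have "1 / (2 * x - 1)^2 - 9 / (4 * x^2) = inner_increment x" if "x \<ge> 1" for x :: real
    unfolding inner_increment_def using that by (simp add: field_simps) algebra
  then show ?thesis
    by (simp add: inner_sum_def)
qed

lemma alternating_sum_Suc:
  "alternating_sum (Suc n) = alternating_sum n - alternating_decrement (real n)"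
proof -
  have "2 * Suc n = Suc (Suc (2 * n))"
    by simp
  then have "alternating_sum (Suc n)
      = alternating_sum n - (1 / (2 * real n + 1)^2 - 1 / (2 * real n + 2)^2)"
    by (simp add: alternating_sum_def algebra_simps)
  also have "1 / (2 * real n + 1)^2 - 1 / (2 * real n + 2)^2 = alternating_decrement (real n)"
    unfolding alternating_decrement_def by (simp add: field_simps) algebra
  finally show ?thesis .
qed

lemma sum_summand: "(\<Sum>k=1..n. summand n k) = 1 - closed_form n"
proof (induction n)
  case 0
  show ?case by (simp add: closed_form_def)
next
  case (Suc n)
  let ?\<gamma> = "closed_form_ratio (real n)"
  define G where "G k = certificate (real n) (real k) * summand (Suc n) k" for k
  have telescoping: "summand (Suc n) k - ?\<gamma> * summand n k = G (Suc k) - G k"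
    if "k \<le> Suc n" for k
  proof -
    have "real k \<le> real n + 1"
      using that by (simp flip: of_nat_Suc)
    moreover have "8 * real k \<noteq> 1"
      by (cases k) auto
    ultimately have identity: "step_ratio (real n) (real k) * certificate (real n) (real k + 1)
        - certificate (real n) (real k) = 1 - level_ratio (real n) (real k)"
      by (intro certificate_identity) auto
    have "G (Suc k) - G k = summand (Suc n) k
        * (step_ratio (real n) (real k) * certificate (real n) (real k + 1)
           - certificate (real n) (real k))"
      by (simp add: G_def summand_Suc_k algebra_simps)
    also have "\<dots> = summand (Suc n) k - summand (Suc n) k * level_ratio (real n) (real k)"
      unfolding identity by (simp add: algebra_simps)
    also have "\<dots> = summand (Suc n) k - ?\<gamma> * summand n k"
      by (simp add: summand_Suc_n[of n k, symmetric] mult.commute)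
    finally show ?thesis ..
  qed
  have "(\<Sum>k=0..Suc n. summand (Suc n) k - ?\<gamma> * summand n k) = G (Suc (Suc n)) - G 0"
    by (simp add: telescoping sum_Suc_diff)
  also have "\<dots> = 0"
    by (simp add: G_def summand_eq_0 certificate_def)
  finally have "(\<Sum>k=0..Suc n. summand (Suc n) k) - ?\<gamma> * (\<Sum>k=0..Suc n. summand n k) = 0"
    by (simp only: sum_subtractf sum_distrib_left)
  then have "(\<Sum>k=1..Suc n. summand (Suc n) k) = 1 + ?\<gamma> * (- closed_form n)"
    using Suc.IH by (simp add: sum.atLeast_Suc_atMost summand_eq_0)
  then show ?case
    by (simp add: closed_form_Suc)
qed

lemma sum_summand_inner_sum:
  "(\<Sum>k=1..n. summand n k * inner_sum k) = closed_form n * alternating_sum n"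
proof (induction n)
  case 0
  show ?case by (simp add: alternating_sum_def)
next
  case (Suc n)
  let ?\<gamma> = "closed_form_ratio (real n)" and ?\<alpha> = "alternating_decrement (real n)"
  define W where "W k = summand (Suc n) k
      * (certificate (real n) (real k) * inner_sum (k - 1) - inner_certificate (real n) (real k))"
    for k
  have telescoping: "W (Suc k) - W k
      = (summand (Suc n) k - ?\<gamma> * summand n k) * inner_sum k - ?\<alpha> * ?\<gamma> * summand n k"
    if "1 \<le> k" "k \<le> Suc n" for k
  proof -
    have k: "1 \<le> real k" "real k \<le> real n + 1" "8 * real k \<noteq> 1"
      using that by (simp_all flip: of_nat_Suc)
    have identity: "step_ratio (real n) (real k) * certificate (real n) (real k + 1)
        - certificate (real n) (real k) = 1 - level_ratio (real n) (real k)"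
      by (rule certificate_identity) (use k in auto)
    have inner_identity: "- (step_ratio (real n) (real k) * inner_certificate (real n) (real k + 1))
        + certificate (real n) (real k) * inner_increment (real k) + inner_certificate (real n) (real k)
        = - (?\<alpha> * level_ratio (real n) (real k))"
      by (rule inner_certificate_identity) (use k in auto)
    have inner_sum_pred: "inner_sum (k - 1) = inner_sum k - inner_increment (real k)"
      using that inner_sum_Suc[of "k - 1"] by simp
    have "W (Suc k) - W k = summand (Suc n) k
        * ((step_ratio (real n) (real k) * certificate (real n) (real k + 1)
            - certificate (real n) (real k)) * inner_sum k
           + (- (step_ratio (real n) (real k) * inner_certificate (real n) (real k + 1))
              + certificate (real n) (real k) * inner_increment (real k)
              + inner_certificate (real n) (real k)))"
      unfolding W_def inner_sum_pred by (simp add: summand_Suc_k algebra_simps)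
    also have "\<dots> = summand (Suc n) k * ((1 - level_ratio (real n) (real k)) * inner_sum k
        - ?\<alpha> * level_ratio (real n) (real k))"
      unfolding identity inner_identity by simp
    also have "\<dots> = (summand (Suc n) k - ?\<gamma> * summand n k) * inner_sum k
        - ?\<alpha> * ?\<gamma> * summand n k"
      by (simp add: summand_Suc_n[of n k, symmetric] algebra_simps)
    finally show ?thesis .
  qed
  have "(\<Sum>k=1..Suc n. (summand (Suc n) k - ?\<gamma> * summand n k) * inner_sum k
      - ?\<alpha> * ?\<gamma> * summand n k) = (\<Sum>k=1..Suc n. W (Suc k) - W k)"
    by (rule sum.cong) (simp_all add: telescoping)
  also have "\<dots> = W (Suc (Suc n)) - W 1"
    by (rule sum_Suc_diff) simp
  also have "\<dots> = - (step_ratio (real n) 0 * inner_certificate (real n) 1)"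
    using summand_Suc_k[of n 0] by (simp add: W_def summand_eq_0 inner_sum_def)
  also have "\<dots> = - (?\<alpha> * ?\<gamma>)"
    by (simp add: inner_certificate_initial)
  finally have telescoped: "(\<Sum>k=1..Suc n. (summand (Suc n) k - ?\<gamma> * summand n k) * inner_sum k
      - ?\<alpha> * ?\<gamma> * summand n k) = - (?\<alpha> * ?\<gamma>)" .
  have recurrence: "(\<Sum>k=1..Suc n. summand (Suc n) k * inner_sum k)
      - ?\<gamma> * (\<Sum>k=1..Suc n. summand n k * inner_sum k)
      - ?\<alpha> * ?\<gamma> * (\<Sum>k=1..Suc n. summand n k) = - (?\<alpha> * ?\<gamma>)"
    unfolding telescoped[symmetric]
    by (simp only: left_diff_distrib sum_subtractf sum_distrib_left mult.assoc)
  have weighted: "(\<Sum>k=1..Suc n. summand n k * inner_sum k) = closed_form n * alternating_sum n"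
    using Suc.IH by (simp add: summand_eq_0)
  have plain: "(\<Sum>k=1..Suc n. summand n k) = 1 - closed_form n"
    using sum_summand[of n] by (simp add: summand_eq_0)
  have "(\<Sum>k=1..Suc n. summand (Suc n) k * inner_sum k)
      = closed_form n * ?\<gamma> * (alternating_sum n - ?\<alpha>)"
    using recurrence unfolding weighted plain by algebra
  then show ?case
    by (simp add: closed_form_Suc alternating_sum_Suc)
qed

theorem mainTheorem9:
  fixes n :: nat
  assumes "n \<ge> 1"
  shows "(\<Sum>k=1..n. (8 * of_nat k - 1)
      * (pochhammer (1::complex) k * pochhammer (-1/4) k * pochhammer (-3/4) k
         / ((pochhammer (1/2) k)^2 * pochhammer (3/2) k))
      * (pochhammer (1/2 + of_nat n) k * pochhammer (- of_nat n) k
         / (pochhammer (1/2 + 3 * of_nat n) k * pochhammer (-1 - 3 * of_nat n) k))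
      * (\<Sum>i=1..k. 1 / (2 * of_nat i - 1)^2 - 9 / (4 * (of_nat i)^2)))
    = (of_nat (fact n))^2 * pochhammer (1/6) n * pochhammer (5/6) n
      / ((pochhammer (1/2) n)^2 * pochhammer (2/3) n * pochhammer (4/3) n)
      * (\<Sum>j=1..2*n. (-1)^j / (of_nat j)^2)"
proof -
  have "complex_of_real (\<Sum>k=1..n. summand n k * inner_sum k)
      = complex_of_real (closed_form n * alternating_sum n)"
    by (simp only: sum_summand_inner_sum)
  then show ?thesis
    by (simp add: summand_def inner_sum_def closed_form_def alternating_sum_def of_real_sum
        pochhammer_of_real [symmetric])
qed

end
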